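(* Let $n\geq3$ and let $S_n$ act on $V=\mathbb{C}^n$ by its natural permutation representation. The subspace of $(H^{2,1}\oplus H^{2,0})^{S_n}$ consisting of elements supported only on $3$-cycles is two-dimensional if $n=3$ and three-dimensional if $n\geq4$.
   Context: $S_n$ acts by $\sigma e_i=e_{\sigma(i)}$. For $g\in S_n$, let $V^g$ be its fixed space, $(V^g)^\perp$ its orthogonal complement (standard bilinear form), $c_g=\operatorname{codim}V^g$; identify $(V^g)^*$ with functionals on $V$ vanishing on $(V^g)^\perp$ and $((V^g)^* )^\perp$ with functionals vanishing on $V^g$. Set $H^{2,d}_g=S^d(V^g)\otimes\bigwedge^{2-c_g}(V^g)^*\otimes\bigwedge^{c_g}((V^g)^* )^\perp\otimes\mathbb{C}g\subseteq S^d(V)\otimes\bigwedge^2V^*\otimes\mathbb{C}g$ (zero if $2-c_g<0$) and $H^{2,d}=\bigoplus_gH^{2,d}_g$, with $S_n$ acting diagonally ($h\cdot(f\otimes\omega\otimes g)=hf\otimes h\omega\otimes hgh^{-1}$). An element is supported only on 3-cycles if its components $H^{2,\bullet}_g$ vanish for all $g$ that are not 3-cycles. *)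

theory Defs
  imports Complex_Main "HOL-Library.Function_Algebras" "HOL-Library.Product_Plus" "HOL-Combinatorics.Permutations"
begin

text \<open>The index set of the standard basis of V = C^n is a finite type 'n,
  n = CARD('n). Vectors of V and functionals on V (in the dual basis) are
  functions 'n => complex; a permutation g of 'n acts by g e_i = e_(g i).
  Lambda^2 V^* is modelled by alternating bilinear forms in coordinates
  w i j = w(e_i, e_j). S^d(V) is modelled by symmetric tensors in coordinates:
  functions on 'n lists (of length d). An element of S^d(V) (x) Lambda^2 V^* is a
  function  'n list => 'n => 'n => complex.\<close>

type_synonym 'n vec = "'n \<Rightarrow> complex"
type_synonym 'n tens = "'n list \<Rightarrow> 'n \<Rightarrow> 'n \<Rightarrow> complex"

definition vscale :: "complex \<Rightarrow> 'n vec \<Rightarrow> 'n vec" where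
  "vscale c v = (\<lambda>i. c * v i)"

definition tscale :: "complex \<Rightarrow> 'n tens \<Rightarrow> 'n tens" where
  "tscale c T = (\<lambda>ks i j. c * T ks i j)"

definition act_vec :: "('n \<Rightarrow> 'n) \<Rightarrow> 'n vec \<Rightarrow> 'n vec" where
  "act_vec g v = (\<lambda>j. v (inv g j))"

definition fixsp :: "('n \<Rightarrow> 'n) \<Rightarrow> 'n vec set" where
  "fixsp g = {v. act_vec g v = v}"

definition bil :: "('n::finite) vec \<Rightarrow> 'n vec \<Rightarrow> complex" where
  "bil u v = (\<Sum>i\<in>UNIV. u i * v i)"

definition fixperp :: "('n::finite \<Rightarrow> 'n) \<Rightarrow> 'n vec set" where
  "fixperp g = {w. \<forall>v\<in>fixsp g. bil w v = 0}"

text \<open>(V^g)^*: functionals vanishing on (V^g)^perp\<close>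
definition dualfix :: "('n::finite \<Rightarrow> 'n) \<Rightarrow> 'n vec set" where
  "dualfix g = {\<phi>. \<forall>w\<in>fixperp g. bil \<phi> w = 0}"

text \<open>((V^g)^*)^perp: functionals vanishing on V^g\<close>
definition annfix :: "('n::finite \<Rightarrow> 'n) \<Rightarrow> 'n vec set" where
  "annfix g = {\<phi>. \<forall>v\<in>fixsp g. bil \<phi> v = 0}"

definition codim :: "('n::finite \<Rightarrow> 'n) \<Rightarrow> nat" where
  "codim g = card (UNIV :: 'n set) - vector_space.dim vscale (fixsp g)"

definition wedge :: "'n vec \<Rightarrow> 'n vec \<Rightarrow> 'n \<Rightarrow> 'n \<Rightarrow> complex" where
  "wedge a b = (\<lambda>i j. a i * b j - a j * b i)"

definition symprod :: "nat \<Rightarrow> (nat \<Rightarrow> 'n vec) \<Rightarrow> 'n list \<Rightarrow> complex" where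
  "symprod d vs = (\<lambda>ks. if length ks = d then
      (\<Sum>\<sigma>\<in>{\<sigma>. \<sigma> permutes {..<d}}. \<Prod>i<d. vs (\<sigma> i) (ks ! i)) else 0)"

definition tensor :: "('n list \<Rightarrow> complex) \<Rightarrow> ('n \<Rightarrow> 'n \<Rightarrow> complex) \<Rightarrow> 'n tens" where
  "tensor f w = (\<lambda>ks i j. f ks * w i j)"

text \<open>H^{2,d}_g as a subspace of S^d(V) (x) Lambda^2 V^*: spanned by
  f (x) (a /\ b) with f in S^d(V^g) and, for c = codim V^g,
  a, b in (V^g)^* if c = 0; a in (V^g)^*, b in ((V^g)^*)^perp if c = 1;
  a, b in ((V^g)^*)^perp if c = 2; and zero if c > 2.\<close>
definition Hg :: "nat \<Rightarrow> ('n::finite \<Rightarrow> 'n) \<Rightarrow> 'n tens set" where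
  "Hg d g = (if codim g > 2 then {0} else
     module.span tscale
       {tensor (symprod d vs) (wedge a b) | vs a b.
          (\<forall>i<d. vs i \<in> fixsp g) \<and>
          a \<in> (if codim g \<le> 1 then dualfix g else annfix g) \<and>
          b \<in> (if codim g = 0 then dualfix g else annfix g)})"

text \<open>H^{2,d} = direct sum over g in S_n of H^{2,d}_g (x) C g; an element is a
  function from permutations to tensors, zero off S_n.\<close>
definition Hsp :: "nat \<Rightarrow> (('n::finite \<Rightarrow> 'n) \<Rightarrow> 'n tens) set" where
  "Hsp d = {x. \<forall>g. (bij g \<longrightarrow> x g \<in> Hg d g) \<and> (\<not> bij g \<longrightarrow> x g = 0)}"

definition act_tens :: "('n \<Rightarrow> 'n) \<Rightarrow> 'n tens \<Rightarrow> 'n tens" where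
  "act_tens h T = (\<lambda>ks i j. T (map (inv h) ks) (inv h i) (inv h j))"

text \<open>S_n-invariance for the diagonal action h (f (x) w (x) g) = hf (x) hw (x) h g h^-1\<close>
definition invariant :: "(('n \<Rightarrow> 'n) \<Rightarrow> 'n tens) \<Rightarrow> bool" where
  "invariant x = (\<forall>h g. bij h \<longrightarrow> x (h \<circ> g \<circ> inv h) = act_tens h (x g))"

definition three_cycle :: "('n \<Rightarrow> 'n) \<Rightarrow> bool" where
  "three_cycle g = (\<exists>a b c. distinct [a, b, c] \<and>
      g = (\<lambda>x. if x = a then b else if x = b then c else if x = c then a else x))"

definition supp3 :: "(('n \<Rightarrow> 'n) \<Rightarrow> 'n tens) \<Rightarrow> bool" where
  "supp3 x = (\<forall>g. \<not> three_cycle g \<longrightarrow> x g = 0)"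

definition pscale :: "complex \<Rightarrow> (('n \<Rightarrow> 'n) \<Rightarrow> 'n tens) \<times> (('n \<Rightarrow> 'n) \<Rightarrow> 'n tens)
    \<Rightarrow> (('n \<Rightarrow> 'n) \<Rightarrow> 'n tens) \<times> (('n \<Rightarrow> 'n) \<Rightarrow> 'n tens)" where
  "pscale c p = ((\<lambda>g. tscale c (fst p g)), (\<lambda>g. tscale c (snd p g)))"

definition U3 :: "((('n::finite \<Rightarrow> 'n) \<Rightarrow> 'n tens) \<times> (('n \<Rightarrow> 'n) \<Rightarrow> 'n tens)) set" where
  "U3 = {(x1, x0). x1 \<in> Hsp 1 \<and> x0 \<in> Hsp 0 \<and> invariant x1 \<and> invariant x0
                 \<and> supp3 x1 \<and> supp3 x0}"

end

theory Submission
  imports Defs "HOL-Library.Indicator_Function"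
begin

text \<open>By invariance, and since all 3-cycles are conjugate, an element of the subspace is
  determined by its two components at one 3-cycle $g = (a\,b\,c)$. There $V^g$ has codimension 2
  and $((V^g)^*)^\perp$ is two-dimensional, so every wedge occurring in $H^{2,d}_g$ is a multiple
  of one form $\omega_g$, and $H^{2,d}_g = S^d(V^g) \otimes \omega_g$. Hence the $H^{2,0}$
  component is a multiple of $\omega_g$ and the $H^{2,1}$ component is $f \otimes \omega_g$ with
  $f \in V^g$. The transpositions of two fixed points of $g$ commute with $g$, so invariance makes
  $f$ constant on the fixed points as well: $f$ is a combination of $e_a + e_b + e_c$ and of the sum
  of the $e_k$ over the fixed points $k$, and the latter is zero exactly when $n = 3$. Conversely
  these elements are invariant, and evaluating at suitable coordinates shows they are independent.\<close>

type_synonym 'n pair = "(('n \<Rightarrow> 'n) \<Rightarrow> 'n tens) \<times> (('n \<Rightarrow> 'n) \<Rightarrow> 'n tens)"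

interpretation vec: vector_space "vscale :: complex \<Rightarrow> 'n vec \<Rightarrow> 'n vec"
  by unfold_locales (simp_all add: vscale_def fun_eq_iff algebra_simps)

interpretation tens: vector_space "tscale :: complex \<Rightarrow> 'n tens \<Rightarrow> 'n tens"
  by unfold_locales (simp_all add: tscale_def fun_eq_iff algebra_simps)

interpretation pairs: vector_space "pscale :: complex \<Rightarrow> 'n pair \<Rightarrow> 'n pair"
  by unfold_locales (simp_all add: pscale_def tscale_def fun_eq_iff algebra_simps)

lemma (in vector_space) independent_if_separating_functionals:
  assumes "finite S"
    and "\<And>v. v \<in> S \<Longrightarrow>
      \<exists>\<phi>. Vector_Spaces.linear scale (*) \<phi> \<and> \<phi> v \<noteq> 0 \<and> (\<forall>w\<in>S - {v}. \<phi> w = 0)"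
  shows "independent S"
proof (rule independent_if_scalars_zero[OF \<open>finite S\<close>])
  fix f v assume sum0: "(\<Sum>x\<in>S. f x *s x) = 0" and v: "v \<in> S"
  obtain \<phi> where lin: "Vector_Spaces.linear scale (*) \<phi>" and "\<phi> v \<noteq> 0"
    and vanish: "\<forall>w\<in>S - {v}. \<phi> w = 0"
    using assms(2)[OF v] by blast
  interpret \<phi>: Vector_Spaces.linear scale "(*)" \<phi> by (fact lin)
  have "0 = \<phi> (\<Sum>x\<in>S. f x *s x)" using sum0 by simp
  also have "\<dots> = (\<Sum>x\<in>S. f x * \<phi> x)" by (simp add: \<phi>.sum \<phi>.scale)
  also have "\<dots> = f v * \<phi> v + (\<Sum>x\<in>S - {v}. f x * \<phi> x)"
    using \<open>finite S\<close> v by (rule sum.remove)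
  also have "\<dots> = f v * \<phi> v" using vanish by simp
  finally show "f v = 0" using \<open>\<phi> v \<noteq> 0\<close> by simp
qed

lemma bij_betw_extends_to_bij:
  fixes f :: "'a::finite \<Rightarrow> 'a"
  assumes "bij_betw f A B"
  obtains h where "bij h" "\<And>x. x \<in> A \<Longrightarrow> h x = f x"
proof -
  have "card (UNIV - A) = card (UNIV - B)"
    using bij_betw_same_card[OF assms] by (simp add: card_Diff_subset)
  then obtain f' where f': "bij_betw f' (UNIV - A) (UNIV - B)"
    by (meson finite finite_same_card_bij)
  define h where "h x = (if x \<in> A then f x else f' x)" for x
  have "bij_betw h A B"
    by (subst bij_betw_cong[of A h f]) (simp_all add: h_def assms)
  moreover have "bij_betw h (UNIV - A) (UNIV - B)"
    by (subst bij_betw_cong[of "UNIV - A" h f']) (simp_all add: h_def f')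
  ultimately have "bij_betw h (A \<union> (UNIV - A)) (B \<union> (UNIV - B))"
    by (rule bij_betw_combine) blast
  then show thesis
    by (intro that[of h]) (simp_all add: h_def)
qed

definition cyc :: "'n \<Rightarrow> 'n \<Rightarrow> 'n \<Rightarrow> 'n \<Rightarrow> 'n" where
  "cyc a b c = (\<lambda>x. if x = a then b else if x = b then c else if x = c then a else x)"

lemma three_cycle_iff_cyc: "three_cycle g \<longleftrightarrow> (\<exists>a b c. distinct [a, b, c] \<and> g = cyc a b c)"
  unfolding three_cycle_def cyc_def by simp

lemma cyc_moved_iff: "distinct [a, b, c] \<Longrightarrow> cyc a b c x \<noteq> x \<longleftrightarrow> x \<in> {a, b, c}"
  unfolding cyc_def by auto

lemma bij_cyc: "distinct [a, b, c] \<Longrightarrow> bij (cyc a b c)"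
  by (rule o_bij[where g = "cyc c b a"]) (auto simp: cyc_def fun_eq_iff)

lemma three_cycle_imp_bij: "three_cycle g \<Longrightarrow> bij g"
  using bij_cyc three_cycle_iff_cyc by metis

lemma conj_apply: "bij h \<Longrightarrow> (h \<circ> g \<circ> inv h) (h x) = h (g x)"
  by (simp add: bij_is_inj)

lemma conj_cyc:
  assumes "bij h"
  shows "h \<circ> cyc a b c \<circ> inv h = cyc (h a) (h b) (h c)"
proof
  fix x
  obtain y where "x = h y" using bij_is_surj[OF assms] by blast
  then show "(h \<circ> cyc a b c \<circ> inv h) x = cyc (h a) (h b) (h c) x"
    using assms by (simp add: conj_apply cyc_def bij_is_inj inj_eq)
qed

lemma three_cycle_conj:
  assumes "bij h" "three_cycle g"
  shows "three_cycle (h \<circ> g \<circ> inv h)"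
proof -
  obtain a b c where "distinct [a, b, c]" "g = cyc a b c"
    using assms(2) unfolding three_cycle_iff_cyc by blast
  then show ?thesis
    unfolding three_cycle_iff_cyc using assms(1)
    by (intro exI[of _ "h a"] exI[of _ "h b"] exI[of _ "h c"]) (simp add: conj_cyc bij_is_inj inj_eq)
qed

lemma three_cycle_conj_iff:
  assumes "bij h"
  shows "three_cycle (h \<circ> g \<circ> inv h) \<longleftrightarrow> three_cycle g"
proof
  have "inv h \<circ> (h \<circ> g \<circ> inv h) \<circ> inv (inv h) = g"
    using assms by (simp add: fun_eq_iff inv_inv_eq bij_is_inj bij_is_surj surj_f_inv_f)
  then show "three_cycle (h \<circ> g \<circ> inv h) \<Longrightarrow> three_cycle g"
    using three_cycle_conj[OF bij_imp_bij_inv[OF assms]] by metis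
qed (rule three_cycle_conj[OF assms])

lemma three_cycles_conjugate:
  fixes g0 g :: "'n::finite \<Rightarrow> 'n"
  assumes "three_cycle g0" "three_cycle g"
  obtains h where "bij h" "g = h \<circ> g0 \<circ> inv h"
proof -
  obtain a0 b0 c0 where d0: "distinct [a0, b0, c0]" and g0: "g0 = cyc a0 b0 c0"
    using assms(1) unfolding three_cycle_iff_cyc by blast
  obtain a b c where d: "distinct [a, b, c]" and g: "g = cyc a b c"
    using assms(2) unfolding three_cycle_iff_cyc by blast
  define f where "f x = (if x = a0 then a else if x = b0 then b else c)" for x
  have f: "bij_betw f {a0, b0, c0} {a, b, c}"
    using d0 d by (auto simp: bij_betw_def inj_on_def f_def)
  obtain h where h: "bij h" "\<And>x. x \<in> {a0, b0, c0} \<Longrightarrow> h x = f x"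
    using bij_betw_extends_to_bij[OF f] by blast
  have "h a0 = a" "h b0 = b" "h c0 = c"
    using h(2) d0 by (auto simp: f_def)
  then show thesis
    using h(1) by (intro that[of h]) (simp_all add: g g0 conj_cyc)
qed

lemma linear_eval_vec: "Vector_Spaces.linear vscale (*) (\<lambda>v. v p)"
  by unfold_locales (simp_all add: vscale_def algebra_simps)

lemma bil_indicator: "bil \<phi> (indicator A) = sum \<phi> A"
proof -
  have "(\<lambda>i. \<phi> i * indicator A i) = (\<lambda>i. if i \<in> A then \<phi> i else 0)"
    by (auto simp: fun_eq_iff)
  then show ?thesis
    unfolding bil_def by (simp add: sum.inter_restrict[symmetric])
qed

lemma fixsp_iff:
  assumes "bij g"
  shows "v \<in> fixsp g \<longleftrightarrow> (\<forall>j. v (g j) = v j)"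
proof -
  have "v \<in> fixsp g \<longleftrightarrow> (\<forall>j. v (inv g j) = v j)"
    unfolding fixsp_def act_vec_def fun_eq_iff by simp
  also have "\<dots> \<longleftrightarrow> (\<forall>j. v (g j) = v j)"
  proof safe
    fix j assume "\<forall>j. v (inv g j) = v j"
    then show "v (g j) = v j" using assms by (metis bij_is_inj inv_f_f)
  next
    fix j assume "\<forall>j. v (g j) = v j"
    then show "v (inv g j) = v j" using assms by (metis bij_is_surj surj_f_inv_f)
  qed
  finally show ?thesis .
qed

lemma fixsp_cyc_iff:
  assumes d: "distinct [a, b, c]"
  shows "v \<in> fixsp (cyc a b c) \<longleftrightarrow> v a = v b \<and> v b = v c"
  unfolding fixsp_iff[OF bij_cyc[OF d]]
proof
  assume "\<forall>j. v (cyc a b c j) = v j"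
  moreover have "cyc a b c a = b" "cyc a b c b = c" using d by (auto simp: cyc_def)
  ultimately show "v a = v b \<and> v b = v c" by metis
qed (use d in \<open>auto simp: cyc_def\<close>)

lemma card_UNIV_ge_3_if_distinct: "distinct [a, b, c :: 'n::finite] \<Longrightarrow> card (UNIV :: 'n set) \<ge> 3"
  using card_mono[of UNIV "{a, b, c}"] by simp

lemma sum_fun_apply: "(\<Sum>a\<in>A. f a) x = (\<Sum>a\<in>A. f a x)"
  by (induction A rule: infinite_finite_induct) auto

lemma dim_fixsp_cyc:
  fixes a b c :: "'n::finite"
  assumes d: "distinct [a, b, c]"
  shows "vec.dim (fixsp (cyc a b c)) = card (UNIV :: 'n set) - 2"
proof -
  define Out where "Out = UNIV - {a, b, c}"
  define B :: "'n vec set" where "B = insert (indicator {a, b, c}) ((\<lambda>k. indicator {k}) ` Out)"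
  have inj: "inj_on (\<lambda>k. indicator {k} :: 'n vec) Out"
  proof (rule inj_onI)
    fix k l :: 'n assume "indicator {k} = (indicator {l} :: 'n vec)"
    then have "indicator {k} k = (indicator {l} k :: complex)" by (rule fun_cong)
    then show "k = l" by (simp add: indicator_def split: if_splits)
  qed
  have new: "indicator {a, b, c} \<notin> (\<lambda>k. indicator {k} :: 'n vec) ` Out"
  proof
    assume "indicator {a, b, c} \<in> (\<lambda>k. indicator {k} :: 'n vec) ` Out"
    then obtain k where "k \<in> Out" "indicator {a, b, c} = (indicator {k} :: 'n vec)" by blast
    then have "k \<in> Out" "indicator {a, b, c} a = (indicator {k} a :: complex)" by simp_all
    then show False unfolding Out_def by (auto simp: indicator_def)
  qed
  have "card B = card Out + 1"
    unfolding B_def using new inj by (simp add: card_image)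
  also have "card Out = card (UNIV :: 'n set) - 3"
    unfolding Out_def using d by (simp add: card_Diff_subset)
  finally have card_B: "card B = card (UNIV :: 'n set) - 2"
    using card_UNIV_ge_3_if_distinct[OF d] by simp
  have B_fix: "B \<subseteq> fixsp (cyc a b c)"
    unfolding B_def Out_def using d by (auto simp: fixsp_cyc_iff indicator_def)
  have span_B: "fixsp (cyc a b c) \<subseteq> vec.span B"
  proof
    fix v :: "'n vec" assume "v \<in> fixsp (cyc a b c)"
    then have "v a = v b" "v b = v c" using fixsp_cyc_iff[OF d] by auto
    then have "v = vscale (v a) (indicator {a, b, c}) + (\<Sum>k\<in>Out. vscale (v k) (indicator {k}))"
      unfolding Out_def by (auto simp: fun_eq_iff vscale_def indicator_def sum_fun_apply)
    also have "\<dots> \<in> vec.span B"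
      unfolding B_def by (intro vec.span_add vec.span_scale vec.span_sum vec.span_base) auto
    finally show "v \<in> vec.span B" .
  qed
  have "vec.independent B"
  proof (rule vec.independent_if_separating_functionals)
    show "finite B" unfolding B_def by simp
    fix v assume "v \<in> B"
    then consider "v = indicator {a, b, c}" | k where "k \<in> Out" "v = indicator {k}"
      unfolding B_def by blast
    then show "\<exists>\<phi>. Vector_Spaces.linear vscale (*) \<phi> \<and> \<phi> v \<noteq> 0 \<and> (\<forall>w\<in>B - {v}. \<phi> w = 0)"
    proof cases
      case 1
      then show ?thesis
        by (intro exI[of _ "\<lambda>w. w a"]) (auto simp: linear_eval_vec B_def Out_def indicator_def)
    next
      case 2
      then show ?thesis
        by (intro exI[of _ "\<lambda>w. w k"]) (auto simp: linear_eval_vec B_def Out_def indicator_def)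
    qed
  qed
  then show ?thesis by (rule vec.dim_unique[OF B_fix span_B _ card_B])
qed

lemma codim_cyc: "distinct [a, b, c :: 'n::finite] \<Longrightarrow> codim (cyc a b c) = 2"
  unfolding codim_def using dim_fixsp_cyc card_UNIV_ge_3_if_distinct by fastforce

lemma bil_commute: "bil u v = bil v u"
  unfolding bil_def by (simp add: mult.commute)

lemma bil_diff: "bil u (v - w) = bil u v - bil u w"
  unfolding bil_def by (simp add: algebra_simps sum_subtractf)

lemma annfix_cyc:
  assumes d: "distinct [a, b, c]" and \<phi>: "\<phi> \<in> annfix (cyc a b c)"
  shows "\<And>k. k \<notin> {a, b, c} \<Longrightarrow> \<phi> k = 0" and "\<phi> a + \<phi> b + \<phi> c = 0"
proof -
  fix k assume "k \<notin> {a, b, c}"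
  then have "indicator {k} \<in> fixsp (cyc a b c)"
    using d by (auto simp: fixsp_cyc_iff indicator_def)
  then have "bil \<phi> (indicator {k}) = 0" using \<phi> unfolding annfix_def by blast
  then show "\<phi> k = 0" by (simp add: bil_indicator)
next
  have "indicator {a, b, c} \<in> fixsp (cyc a b c)"
    using d by (simp add: fixsp_cyc_iff)
  then have "bil \<phi> (indicator {a, b, c}) = 0" using \<phi> unfolding annfix_def by blast
  then show "\<phi> a + \<phi> b + \<phi> c = 0" using d by (simp add: bil_indicator add.assoc)
qed

lemma indicator_diff_annfix:
  assumes "distinct [a, b, c]" "x \<in> {a, b, c}" "y \<in> {a, b, c}"
  shows "indicator {x} - indicator {y} \<in> annfix (cyc a b c)"
  unfolding annfix_def mem_Collect_eq
proof
  fix v assume "v \<in> fixsp (cyc a b c)"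
  then have "v x = v y" using assms fixsp_cyc_iff by fastforce
  then show "bil (indicator {x} - indicator {y}) v = 0"
    by (simp add: bil_commute[of _ v] bil_diff bil_indicator)
qed

text \<open>For a 3-cycle $g = (a\,b\,c)$ this is
  $e_a^* \wedge e_b^* + e_b^* \wedge e_c^* + e_c^* \wedge e_a^*$, which spans
  $\bigwedge^2 ((V^g)^*)^\perp$.\<close>
definition cycle_form :: "('n \<Rightarrow> 'n) \<Rightarrow> 'n \<Rightarrow> 'n \<Rightarrow> complex" where
  "cycle_form g i j = (if g i \<noteq> i \<and> j = g i then 1 else if g j \<noteq> j \<and> i = g j then -1 else 0)"

lemma cycle_form_cyc:
  assumes "distinct [a, b, c]"
  shows "cycle_form (cyc a b c) i j =
    (if (i, j) \<in> {(a, b), (b, c), (c, a)} then 1 else if (j, i) \<in> {(a, b), (b, c), (c, a)} then -1 else 0)"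
  using assms unfolding cycle_form_def cyc_def by auto

lemma cycle_form_conj:
  assumes "bij h"
  shows "cycle_form (h \<circ> g \<circ> inv h) = (\<lambda>i j. cycle_form g (inv h i) (inv h j))"
proof (intro ext)
  fix i j
  obtain x y where "i = h x" "j = h y" using bij_is_surj[OF assms] by (metis surjD)
  then show "cycle_form (h \<circ> g \<circ> inv h) i j = cycle_form g (inv h i) (inv h j)"
    using assms by (simp add: cycle_form_def conj_apply bij_is_inj inj_eq)
qed

lemma moved_conj:
  assumes "bij h"
  shows "(h \<circ> g \<circ> inv h) k \<noteq> k \<longleftrightarrow> g (inv h k) \<noteq> inv h k"
proof -
  obtain x where "k = h x" using bij_is_surj[OF assms] by (metis surjD)
  then show ?thesis using assms by (simp add: conj_apply bij_is_inj inj_eq)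
qed

lemma wedge_annfix_cyc:
  assumes d: "distinct [a, b, c]"
    and \<phi>: "\<phi> \<in> annfix (cyc a b c)" and \<psi>: "\<psi> \<in> annfix (cyc a b c)"
  shows "wedge \<phi> \<psi> i j = (\<phi> a * \<psi> b - \<phi> b * \<psi> a) * cycle_form (cyc a b c) i j"
proof -
  note \<Phi> = annfix_cyc[OF d \<phi>] and \<Psi> = annfix_cyc[OF d \<psi>]
  have c: "\<phi> c = - \<phi> a - \<phi> b" "\<psi> c = - \<psi> a - \<psi> b"
    using \<Phi>(2) \<Psi>(2) by algebra+
  have "i = a \<or> i = b \<or> i = c \<or> i \<notin> {a, b, c}" "j = a \<or> j = b \<or> j = c \<or> j \<notin> {a, b, c}"
    by auto
  then show ?thesis
    using d unfolding wedge_def cycle_form_cyc[OF d]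
    by (elim disjE) (auto simp: \<Phi>(1) \<Psi>(1) c algebra_simps)
qed

lemma symprod_0: "symprod 0 vs = (\<lambda>ks. if ks = [] then 1 else 0)"
proof -
  have "{\<sigma>. \<sigma> permutes {..<0::nat}} = {id}" by simp
  then show ?thesis unfolding symprod_def by (simp add: fun_eq_iff)
qed

lemma symprod_1: "symprod 1 vs = (\<lambda>ks. if length ks = 1 then vs 0 (hd ks) else 0)"
proof
  fix ks :: "'a list"
  have "{..<1::nat} = {0}" by auto
  then have "{\<sigma>. \<sigma> permutes {..<1::nat}} = {id}" by simp
  moreover have "length ks = 1 \<Longrightarrow> ks ! 0 = hd ks" by (cases ks) auto
  ultimately show "symprod 1 vs ks = (if length ks = 1 then vs 0 (hd ks) else 0)"
    unfolding symprod_def by simp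
qed

lemma symprod_map_fixed:
  assumes "bij g" "\<forall>i<d. vs i \<in> fixsp g"
  shows "symprod d vs (map g ks) = symprod d vs ks"
proof (cases "length ks = d")
  case True
  have "vs (\<sigma> i) (g (ks ! i)) = vs (\<sigma> i) (ks ! i)" if "\<sigma> permutes {..<d}" "i < d" for \<sigma> i
    using assms that permutes_in_image[OF that(1)] by (simp add: fixsp_iff)
  then show ?thesis
    using True unfolding symprod_def by (auto intro!: sum.cong prod.cong)
qed (simp add: symprod_def)

definition cycle_tensors :: "nat \<Rightarrow> ('n \<Rightarrow> 'n) \<Rightarrow> 'n tens set" where
  "cycle_tensors d g = {tensor F (cycle_form g) | F.
     (\<forall>ks. F (map g ks) = F ks) \<and> (\<forall>ks. length ks \<noteq> d \<longrightarrow> F ks = 0)}"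

lemma tensor_add: "tensor F w + tensor G w = tensor (\<lambda>ks. F ks + G ks) w"
  by (simp add: tensor_def fun_eq_iff algebra_simps)

lemma tscale_tensor: "tscale c (tensor F w) = tensor (\<lambda>ks. c * F ks) w"
  by (simp add: tscale_def tensor_def mult.assoc)

lemma cycle_tensorsI:
  "(\<And>ks. F (map g ks) = F ks) \<Longrightarrow> (\<And>ks. length ks \<noteq> d \<Longrightarrow> F ks = 0) \<Longrightarrow>
    tensor F (cycle_form g) \<in> cycle_tensors d g"
  unfolding cycle_tensors_def by blast

lemma cycle_tensorsE:
  assumes "x \<in> cycle_tensors d g"
  obtains F where "x = tensor F (cycle_form g)" "\<And>ks. F (map g ks) = F ks"
    "\<And>ks. length ks \<noteq> d \<Longrightarrow> F ks = 0"
  using assms unfolding cycle_tensors_def by blast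

lemma subspace_cycle_tensors: "tens.subspace (cycle_tensors d g)"
  unfolding tens.subspace_def
proof (intro conjI ballI allI)
  have "0 = tensor (\<lambda>_. 0) (cycle_form g)" by (simp add: tensor_def fun_eq_iff)
  also have "\<dots> \<in> cycle_tensors d g" by (rule cycle_tensorsI) simp_all
  finally show "0 \<in> cycle_tensors d g" .
next
  fix x y assume "x \<in> cycle_tensors d g" "y \<in> cycle_tensors d g"
  then obtain F G where F: "x = tensor F (cycle_form g)"
    "\<And>ks. F (map g ks) = F ks" "\<And>ks. length ks \<noteq> d \<Longrightarrow> F ks = 0"
    and G: "y = tensor G (cycle_form g)"
    "\<And>ks. G (map g ks) = G ks" "\<And>ks. length ks \<noteq> d \<Longrightarrow> G ks = 0"
    by (metis cycle_tensorsE)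
  have "tensor (\<lambda>ks. F ks + G ks) (cycle_form g) \<in> cycle_tensors d g"
    by (rule cycle_tensorsI) (simp_all add: F G)
  then show "x + y \<in> cycle_tensors d g" by (simp add: F G tensor_add)
next
  fix c x assume "x \<in> cycle_tensors d g"
  then obtain F where F: "x = tensor F (cycle_form g)"
    "\<And>ks. F (map g ks) = F ks" "\<And>ks. length ks \<noteq> d \<Longrightarrow> F ks = 0"
    by (metis cycle_tensorsE)
  have "tensor (\<lambda>ks. c * F ks) (cycle_form g) \<in> cycle_tensors d g"
    by (rule cycle_tensorsI) (simp_all add: F)
  then show "tscale c x \<in> cycle_tensors d g" by (simp add: F tscale_tensor)
qed

lemma Hg_cyc:
  "distinct [a, b, c] \<Longrightarrow> Hg d (cyc a b c) = tens.span {tensor (symprod d vs) (wedge p q) | vs p q.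
     (\<forall>i<d. vs i \<in> fixsp (cyc a b c)) \<and> p \<in> annfix (cyc a b c) \<and> q \<in> annfix (cyc a b c)}"
  unfolding Hg_def by (simp add: codim_cyc)

lemma Hg_cyc_subset_cycle_tensors:
  assumes d: "distinct [a, b, c]"
  shows "Hg d (cyc a b c) \<subseteq> cycle_tensors d (cyc a b c)"
  unfolding Hg_cyc[OF d]
proof (rule tens.span_minimal[OF _ subspace_cycle_tensors], clarify)
  fix vs p q
  assume vs: "\<forall>i<d. vs i \<in> fixsp (cyc a b c)"
    and p: "p \<in> annfix (cyc a b c)" and q: "q \<in> annfix (cyc a b c)"
  define F where "F ks = (p a * q b - p b * q a) * symprod d vs ks" for ks
  have "tensor (symprod d vs) (wedge p q) = tensor F (cycle_form (cyc a b c))"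
    unfolding tensor_def F_def fun_eq_iff wedge_annfix_cyc[OF d p q] by simp
  moreover have "F (map (cyc a b c) ks) = F ks" for ks
    unfolding F_def using symprod_map_fixed[OF bij_cyc[OF d] vs] by simp
  moreover have "length ks \<noteq> d \<Longrightarrow> F ks = 0" for ks
    unfolding F_def symprod_def by simp
  ultimately show "tensor (symprod d vs) (wedge p q) \<in> cycle_tensors d (cyc a b c)"
    unfolding cycle_tensors_def by blast
qed

lemma cycle_form_tensor_in_Hg:
  assumes d: "distinct [a, b, c]" and vs: "\<forall>i<d. vs i \<in> fixsp (cyc a b c)"
  shows "tensor (symprod d vs) (cycle_form (cyc a b c)) \<in> Hg d (cyc a b c)"
proof -
  let ?p = "indicator {a} - indicator {b}" and ?q = "indicator {b} - indicator {c}"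
  have p: "?p \<in> annfix (cyc a b c)" and q: "?q \<in> annfix (cyc a b c)"
    using indicator_diff_annfix[OF d] by simp_all
  have "wedge ?p ?q = cycle_form (cyc a b c)"
    using d by (simp add: fun_eq_iff wedge_annfix_cyc[OF d p q])
  moreover have "tensor (symprod d vs) (wedge ?p ?q) \<in> Hg d (cyc a b c)"
    unfolding Hg_cyc[OF d] by (rule tens.span_base) (use vs p q in blast)
  ultimately show ?thesis by simp
qed

lemma zero_in_Hg: "0 \<in> Hg d g"
  unfolding Hg_def by (simp add: tens.span_zero)

lemma act_tens_tensor:
  "act_tens h (tensor F w) = tensor (\<lambda>ks. F (map (inv h) ks)) (\<lambda>i j. w (inv h i) (inv h j))"
  by (simp add: act_tens_def tensor_def)

lemma act_tens_zero: "act_tens h 0 = 0"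
  by (simp add: act_tens_def fun_eq_iff)

definition E0 :: "('n \<Rightarrow> 'n) \<Rightarrow> 'n tens" where
  "E0 g = (if three_cycle g then tensor (\<lambda>ks. if ks = [] then 1 else 0) (cycle_form g) else 0)"

text \<open>For $g = (a\,b\,c)$, \<open>E1 True g\<close> is $(e_a + e_b + e_c) \otimes \omega_g$ and
  \<open>E1 False g\<close> is $(\sum_{k \notin \{a,b,c\}} e_k) \otimes \omega_g$, where $\omega_g$ is
  the cycle form.\<close>
definition E1 :: "bool \<Rightarrow> ('n \<Rightarrow> 'n) \<Rightarrow> 'n tens" where
  "E1 moved g = (if three_cycle g then
     tensor (\<lambda>ks. if length ks = 1 \<and> (g (hd ks) \<noteq> hd ks) = moved then 1 else 0) (cycle_form g)
   else 0)"

lemma E0_in_Hsp: "E0 \<in> Hsp 0"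
  unfolding Hsp_def
proof (intro CollectI allI conjI impI)
  fix g :: "'n::finite \<Rightarrow> 'n"
  show "E0 g \<in> Hg 0 g"
  proof (cases "three_cycle g")
    case True
    then obtain a b c where d: "distinct [a, b, c]" and g: "g = cyc a b c"
      unfolding three_cycle_iff_cyc by blast
    show ?thesis
      using cycle_form_tensor_in_Hg[OF d, of 0] True by (simp add: E0_def g symprod_0)
  qed (simp add: E0_def zero_in_Hg)
  show "\<not> bij g \<Longrightarrow> E0 g = 0"
    using three_cycle_imp_bij by (auto simp: E0_def)
qed

lemma E1_in_Hsp: "E1 moved \<in> Hsp 1"
  unfolding Hsp_def
proof (intro CollectI allI conjI impI)
  fix g :: "'n::finite \<Rightarrow> 'n"
  show "E1 moved g \<in> Hg 1 g"
  proof (cases "three_cycle g")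
    case True
    then obtain a b c where d: "distinct [a, b, c]" and g: "g = cyc a b c"
      unfolding three_cycle_iff_cyc by blast
    define f :: "'n vec" where "f k = (if (g k \<noteq> k) = moved then 1 else 0)" for k
    have "f \<in> fixsp g"
      using bij_cyc[OF d] by (simp add: g fixsp_iff f_def bij_is_inj inj_eq)
    moreover have "E1 moved g = tensor (symprod 1 (\<lambda>_. f)) (cycle_form g)"
      unfolding symprod_1 using True by (auto simp: E1_def f_def tensor_def fun_eq_iff)
    ultimately show ?thesis
      using cycle_form_tensor_in_Hg[OF d, of 1 "\<lambda>_. f"] g by simp
  qed (simp add: E1_def zero_in_Hg)
  show "\<not> bij g \<Longrightarrow> E1 moved g = 0"
    using three_cycle_imp_bij by (auto simp: E1_def)
qed

lemma E0_invariant: "invariant E0"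
  unfolding invariant_def
proof (intro allI impI)
  fix h g :: "'n \<Rightarrow> 'n" assume h: "bij h"
  show "E0 (h \<circ> g \<circ> inv h) = act_tens h (E0 g)"
    by (simp add: E0_def three_cycle_conj_iff[OF h] act_tens_tensor act_tens_zero
        cycle_form_conj[OF h])
qed

lemma E1_invariant: "invariant (E1 moved)"
  unfolding invariant_def
proof (intro allI impI)
  fix h g :: "'n \<Rightarrow> 'n" assume h: "bij h"
  have "(\<lambda>ks. if length ks = 1 \<and> (g (hd (map (inv h) ks)) \<noteq> hd (map (inv h) ks)) = moved
      then 1 else 0) =
    (\<lambda>ks. if length ks = 1 \<and> (g (inv h (hd ks)) \<noteq> inv h (hd ks)) = moved then 1 else (0::complex))"
    by (auto simp: fun_eq_iff length_Suc_conv)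
  then show "E1 moved (h \<circ> g \<circ> inv h) = act_tens h (E1 moved g)"
    by (simp add: E1_def three_cycle_conj_iff[OF h] act_tens_tensor act_tens_zero
        cycle_form_conj[OF h] moved_conj[OF h] del: comp_apply)
qed

lemma zero_in_Hsp: "0 \<in> Hsp d"
  unfolding Hsp_def by (simp add: zero_in_Hg)

lemma invariant_zero: "invariant 0"
  unfolding invariant_def by (simp add: act_tens_zero)

lemma E0_in_U3: "(0, E0) \<in> U3"
  using zero_in_Hsp E0_in_Hsp invariant_zero E0_invariant by (auto simp: U3_def supp3_def E0_def)

lemma E1_in_U3: "(E1 moved, 0) \<in> U3"
  using zero_in_Hsp E1_in_Hsp invariant_zero E1_invariant by (auto simp: U3_def supp3_def E1_def)

lemma invariant_add: "invariant x \<Longrightarrow> invariant y \<Longrightarrow> invariant (x + y)"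
  by (simp add: invariant_def act_tens_def fun_eq_iff)

lemma invariant_tscale: "invariant x \<Longrightarrow> invariant (\<lambda>g. tscale c (x g))"
  by (simp add: invariant_def act_tens_def tscale_def)

lemma supp3_add: "supp3 x \<Longrightarrow> supp3 y \<Longrightarrow> supp3 (x + y)"
  by (simp add: supp3_def)

lemma supp3_tscale: "supp3 x \<Longrightarrow> supp3 (\<lambda>g. tscale c (x g))"
  by (simp add: supp3_def tscale_def fun_eq_iff)

lemma supp3_E0: "supp3 E0" and supp3_E1: "supp3 (E1 moved)"
  by (simp_all add: supp3_def E0_def E1_def)

lemma invariant_supp3_eqI:
  fixes x y :: "('n::finite \<Rightarrow> 'n) \<Rightarrow> 'n tens"
  assumes "invariant x" "invariant y" "supp3 x" "supp3 y" "three_cycle g0" "x g0 = y g0"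
  shows "x = y"
proof
  fix g show "x g = y g"
  proof (cases "three_cycle g")
    case True
    then obtain h where "bij h" "g = h \<circ> g0 \<circ> inv h"
      using three_cycles_conjugate[OF assms(5)] by blast
    then show ?thesis using assms(1,2,6) unfolding invariant_def by metis
  next
    case False
    then show ?thesis using assms(3,4) by (simp add: supp3_def)
  qed
qed

lemma Hg0_cyc_eq:
  assumes d: "distinct [a, b, c]" and x: "x \<in> Hg 0 (cyc a b c)"
  shows "x = tscale (x [] a b) (E0 (cyc a b c))"
proof -
  obtain F where F: "x = tensor F (cycle_form (cyc a b c))" "\<And>ks. length ks \<noteq> 0 \<Longrightarrow> F ks = 0"
    using Hg_cyc_subset_cycle_tensors[OF d] x by (metis subsetD cycle_tensorsE)
  have "cycle_form (cyc a b c) a b = 1" using d by (simp add: cycle_form_cyc)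
  moreover have "three_cycle (cyc a b c)" using d three_cycle_iff_cyc by blast
  ultimately show ?thesis
    using F by (auto simp: E0_def tscale_def tensor_def fun_eq_iff)
qed

lemma transpose_fixes_cycle_points:
  "k \<notin> {a, b, c} \<Longrightarrow> l \<notin> {a, b, c} \<Longrightarrow>
    transpose k l a = a \<and> transpose k l b = b \<and> transpose k l c = c"
  by (auto simp: transpose_def)

lemma transpose_fixed_points_conj_cyc:
  "k \<notin> {a, b, c} \<Longrightarrow> l \<notin> {a, b, c} \<Longrightarrow>
    transpose k l \<circ> cyc a b c \<circ> inv (transpose k l) = cyc a b c"
  using conj_cyc[of "transpose k l" a b c] transpose_fixes_cycle_points[of k a b c l] by simp

lemma Hsp1_invariant_at_cyc_coefficients:
  assumes d: "distinct [a, b, c]" and x: "x \<in> Hsp 1" "invariant x"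
  obtains F where "x (cyc a b c) = tensor F (cycle_form (cyc a b c))"
    "\<And>ks. length ks \<noteq> 1 \<Longrightarrow> F ks = 0"
    "\<And>k. k \<in> {a, b, c} \<Longrightarrow> F [k] = F [a]"
    "\<And>k l. k \<notin> {a, b, c} \<Longrightarrow> l \<notin> {a, b, c} \<Longrightarrow> F [k] = F [l]"
proof -
  let ?g = "cyc a b c"
  have "x ?g \<in> Hg 1 ?g" using x(1) bij_cyc[OF d] by (simp add: Hsp_def)
  then obtain F where F: "x ?g = tensor F (cycle_form ?g)"
    "\<And>ks. F (map ?g ks) = F ks" "\<And>ks. length ks \<noteq> 1 \<Longrightarrow> F ks = 0"
    using Hg_cyc_subset_cycle_tensors[OF d] by (metis subsetD cycle_tensorsE)
  have "?g a = b" "?g b = c" using d by (auto simp: cyc_def)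
  then have "F [a] = F [b]" "F [b] = F [c]"
    using F(2)[of "[a]"] F(2)[of "[b]"] by simp_all
  then have moved: "F [k] = F [a]" if "k \<in> {a, b, c}" for k
    using that by auto
  have form_ab: "cycle_form ?g a b = 1" using d by (simp add: cycle_form_cyc)
  have fixed: "F [k] = F [l]" if "k \<notin> {a, b, c}" "l \<notin> {a, b, c}" for k l
  proof -
    let ?t = "transpose k l"
    have "x ?g = act_tens ?t (x ?g)"
      using x(2) transpose_fixed_points_conj_cyc[OF that] unfolding invariant_def
      by (metis bij_transpose)
    then have "x ?g [k] a b = act_tens ?t (x ?g) [k] a b" by simp
    then show ?thesis
      using that form_ab transpose_fixes_cycle_points[OF that]
      by (simp add: F(1) act_tens_def tensor_def)
  qed
  show thesis by (rule that[OF F(1,3) moved fixed])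
qed

text \<open>When $g$ has no fixed point ($n = 3$) the choice of \<open>k0\<close> is arbitrary, but then
  \<open>E1 False g = 0\<close>.\<close>
lemma Hsp1_invariant_at_cyc_decompose:
  assumes d: "distinct [a, b, c]" and x: "x \<in> Hsp 1" "invariant x"
  defines "k0 \<equiv> SOME k. k \<notin> {a, b, c}"
  shows "x (cyc a b c) = tscale (x (cyc a b c) [a] a b) (E1 True (cyc a b c))
                       + tscale (x (cyc a b c) [k0] a b) (E1 False (cyc a b c))"
proof -
  let ?g = "cyc a b c"
  obtain F where F: "x ?g = tensor F (cycle_form ?g)" "\<And>ks. length ks \<noteq> 1 \<Longrightarrow> F ks = 0"
    "\<And>k. k \<in> {a, b, c} \<Longrightarrow> F [k] = F [a]"
    "\<And>k l. k \<notin> {a, b, c} \<Longrightarrow> l \<notin> {a, b, c} \<Longrightarrow> F [k] = F [l]"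
    using Hsp1_invariant_at_cyc_coefficients[OF d x] by blast
  have form_ab: "cycle_form ?g a b = 1" using d by (simp add: cycle_form_cyc)
  have tc: "three_cycle ?g" using d three_cycle_iff_cyc by blast
  define \<alpha> \<beta> where "\<alpha> = F [a]" and "\<beta> = F [k0]"
  have Fks: "F ks = (if length ks = 1 \<and> ?g (hd ks) \<noteq> hd ks then \<alpha> else 0)
                  + (if length ks = 1 \<and> ?g (hd ks) = hd ks then \<beta> else 0)" for ks
  proof (cases "length ks = 1")
    case True
    then obtain k where "ks = [k]" by (auto simp: length_Suc_conv)
    moreover have "k0 \<notin> {a, b, c}" if "k \<notin> {a, b, c}"
      unfolding k0_def using that by (rule someI)
    ultimately show ?thesis
      using F(3)[of k] F(4)[of k k0] cyc_moved_iff[OF d, of k] by (auto simp: \<alpha>_def \<beta>_def)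
  qed (simp add: F(2))
  have "x ?g [a] a b = \<alpha>" "x ?g [k0] a b = \<beta>"
    by (simp_all add: F(1) tensor_def form_ab \<alpha>_def \<beta>_def)
  then show ?thesis
    unfolding F(1) E1_def tscale_def tensor_def plus_fun_def
    by (simp add: tc fun_eq_iff Fks algebra_simps)
qed

lemma U3_subset_span:
  fixes a b c :: "'n::finite"
  assumes d: "distinct [a, b, c]"
  shows "(U3 :: 'n pair set) \<subseteq> pairs.span {(E1 True, 0), (E1 False, 0), (0, E0)}"
proof
  fix p :: "'n pair"
  assume "p \<in> U3"
  then obtain x1 x0 where p: "p = (x1, x0)"
    and x1: "x1 \<in> Hsp 1" "invariant x1" "supp3 x1" and x0: "x0 \<in> Hsp 0" "invariant x0" "supp3 x0"
    unfolding U3_def by auto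
  let ?g = "cyc a b c"
  have g: "three_cycle ?g" "bij ?g"
    using d bij_cyc[OF d] unfolding three_cycle_iff_cyc by blast+
  define k0 where "k0 = (SOME k. k \<notin> {a, b, c})"
  define \<alpha> \<beta> C where "\<alpha> = x1 ?g [a] a b" and "\<beta> = x1 ?g [k0] a b" and "C = x0 ?g [] a b"
  have "x0 ?g \<in> Hg 0 ?g" using x0(1) g(2) by (simp add: Hsp_def)
  then have x0_g: "x0 ?g = tscale C (E0 ?g)"
    unfolding C_def by (rule Hg0_cyc_eq[OF d])
  have x0_eq: "x0 = (\<lambda>g. tscale C (E0 g))"
    by (rule invariant_supp3_eqI[OF x0(2) invariant_tscale[OF E0_invariant] x0(3)
          supp3_tscale[OF supp3_E0] g(1)]) (simp add: x0_g)
  have x1_g: "x1 ?g = tscale \<alpha> (E1 True ?g) + tscale \<beta> (E1 False ?g)"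
    unfolding \<alpha>_def \<beta>_def k0_def by (rule Hsp1_invariant_at_cyc_decompose[OF d x1(1,2)])
  let ?y1 = "(\<lambda>g. tscale \<alpha> (E1 True g)) + (\<lambda>g. tscale \<beta> (E1 False g))"
  have "invariant ?y1" by (intro invariant_add invariant_tscale E1_invariant)
  moreover have "supp3 ?y1" by (intro supp3_add supp3_tscale supp3_E1)
  ultimately have x1_eq: "x1 = ?y1"
    by (intro invariant_supp3_eqI[OF x1(2) _ x1(3) _ g(1)]) (simp_all add: x1_g)
  have "p = pscale \<alpha> (E1 True, 0) + pscale \<beta> (E1 False, 0) + pscale C (0, E0)"
    by (simp add: p x0_eq x1_eq pscale_def tscale_def fun_eq_iff)
  then show "p \<in> pairs.span {(E1 True, 0), (E1 False, 0), (0, E0)}"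
    by (simp add: pairs.span_add pairs.span_scale pairs.span_base)
qed

lemma linear_eval_fst: "Vector_Spaces.linear pscale (*) (\<lambda>p :: 'n pair. fst p g ks i j)"
  by unfold_locales (simp_all add: pscale_def tscale_def algebra_simps fun_eq_iff)

lemma linear_eval_snd: "Vector_Spaces.linear pscale (*) (\<lambda>p :: 'n pair. snd p g ks i j)"
  by unfold_locales (simp_all add: pscale_def tscale_def algebra_simps fun_eq_iff)

lemma E_values_at_cyc:
  assumes d: "distinct [a, b, c]"
  shows "E0 (cyc a b c) [] a b = 1" "E0 (cyc a b c) [k] a b = 0"
    and "E1 moved (cyc a b c) [k] a b = (if (k \<in> {a, b, c}) = moved then 1 else 0)"
proof -
  have "three_cycle (cyc a b c)" using d unfolding three_cycle_iff_cyc by blast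
  moreover have "cycle_form (cyc a b c) a b = 1" using d by (simp add: cycle_form_cyc)
  ultimately show "E0 (cyc a b c) [] a b = 1" "E0 (cyc a b c) [k] a b = 0"
    "E1 moved (cyc a b c) [k] a b = (if (k \<in> {a, b, c}) = moved then 1 else 0)"
    using cyc_moved_iff[OF d, of k] by (simp_all add: E0_def E1_def tensor_def)
qed

lemma independent_E1_moved_E0:
  assumes d: "distinct [a, b, c :: 'n::finite]"
  shows "pairs.independent {(E1 True, 0), (0, E0) :: 'n pair}"
proof (rule pairs.independent_if_separating_functionals)
  let ?g = "cyc a b c"
  fix v assume "v \<in> {(E1 True, 0), (0, E0) :: 'n pair}"
  then consider "v = (E1 True, 0)" | "v = (0, E0)" by blast
  then show "\<exists>\<phi>. Vector_Spaces.linear pscale (*) \<phi> \<and> \<phi> v \<noteq> 0 \<and>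
      (\<forall>w\<in>{(E1 True, 0), (0, E0)} - {v}. \<phi> w = 0)"
  proof cases
    case 1
    then show ?thesis using E_values_at_cyc[OF d]
      by (intro exI[of _ "\<lambda>p. fst p ?g [a] a b"]) (auto simp: linear_eval_fst)
  next
    case 2
    then show ?thesis using E_values_at_cyc[OF d]
      by (intro exI[of _ "\<lambda>p. snd p ?g [] a b"]) (auto simp: linear_eval_snd)
  qed
qed simp

lemma independent_E1_E0:
  assumes d: "distinct [a, b, c :: 'n::finite]" and k: "k \<notin> {a, b, c}"
  shows "pairs.independent {(E1 True, 0), (E1 False, 0), (0, E0) :: 'n pair}"
proof (rule pairs.independent_if_separating_functionals)
  let ?g = "cyc a b c"
  fix v assume "v \<in> {(E1 True, 0), (E1 False, 0), (0, E0) :: 'n pair}"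
  then consider "v = (E1 True, 0)" | "v = (E1 False, 0)" | "v = (0, E0)" by blast
  then show "\<exists>\<phi>. Vector_Spaces.linear pscale (*) \<phi> \<and> \<phi> v \<noteq> 0 \<and>
      (\<forall>w\<in>{(E1 True, 0), (E1 False, 0), (0, E0)} - {v}. \<phi> w = 0)"
  proof cases
    case 1
    then show ?thesis using E_values_at_cyc[OF d]
      by (intro exI[of _ "\<lambda>p. fst p ?g [a] a b"]) (auto simp: linear_eval_fst)
  next
    case 2
    then show ?thesis using E_values_at_cyc[OF d] k
      by (intro exI[of _ "\<lambda>p. fst p ?g [k] a b"]) (auto simp: linear_eval_fst)
  next
    case 3
    then show ?thesis using E_values_at_cyc[OF d]
      by (intro exI[of _ "\<lambda>p. snd p ?g [] a b"]) (auto simp: linear_eval_snd)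
  qed
qed simp

lemma E1_False_eq_0_if_card_3:
  assumes "card (UNIV :: 'n::finite set) = 3"
  shows "E1 False = (0 :: ('n \<Rightarrow> 'n) \<Rightarrow> 'n tens)"
proof
  fix g :: "'n \<Rightarrow> 'n"
  show "E1 False g = 0 g"
  proof (cases "three_cycle g")
    case True
    then obtain a b c where d: "distinct [a, b, c]" and g: "g = cyc a b c"
      unfolding three_cycle_iff_cyc by blast
    have "{a, b, c} = (UNIV :: 'n set)"
      using d assms by (intro card_subset_eq) auto
    then show ?thesis
      using cyc_moved_iff[OF d] by (auto simp: E1_def g tensor_def fun_eq_iff)
  qed (simp add: E1_def)
qed

lemma card_E1_moved_E0:
  fixes a b c :: "'n::finite"
  assumes d: "distinct [a, b, c]"
  shows "card {(E1 True, 0), (0, E0) :: 'n pair} = 2"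
proof -
  have "fst ((E1 True, 0) :: 'n pair) (cyc a b c) [a] a b \<noteq> fst ((0, E0) :: 'n pair) (cyc a b c) [a] a b"
    using E_values_at_cyc[OF d] by simp
  then have "(E1 True, 0) \<noteq> ((0, E0) :: 'n pair)" by metis
  then show ?thesis by simp
qed

lemma card_E1_E0:
  fixes a b c :: "'n::finite"
  assumes d: "distinct [a, b, c]" and k: "k \<notin> {a, b, c}"
  shows "card {(E1 True, 0), (E1 False, 0), (0, E0) :: 'n pair} = 3"
proof -
  let ?at = "\<lambda>k (p :: 'n pair). fst p (cyc a b c) [k] a b"
  have "?at a (E1 True, 0) \<noteq> ?at a (E1 False, 0)" "?at a (E1 True, 0) \<noteq> ?at a (0, E0)"
    "?at k (E1 False, 0) \<noteq> ?at k (0, E0)"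
    using E_values_at_cyc[OF d] k by simp_all
  then have "(E1 True, 0) \<noteq> ((E1 False, 0) :: 'n pair)" "(E1 True, 0) \<noteq> ((0, E0) :: 'n pair)"
    "(E1 False, 0) \<noteq> ((0, E0) :: 'n pair)" by metis+
  then show ?thesis by simp
qed

lemma obtain_distinct_triple:
  assumes "card (UNIV :: 'n::finite set) \<ge> 3"
  obtains a b c :: "'n::finite" where "distinct [a, b, c]"
proof -
  obtain T :: "'n set" where "card T = 3"
    using obtain_subset_with_card_n[OF assms] by blast
  then show thesis using that unfolding card_3_iff by auto
qed

theorem lemma4p5:
  assumes "card (UNIV :: 'n::finite set) \<ge> 3"
  shows "vector_space.dim pscale (U3 :: ((('n::finite \<Rightarrow> 'n) \<Rightarrow> 'n tens) \<times> (('n \<Rightarrow> 'n) \<Rightarrow> 'n tens)) set)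
           = (if card (UNIV :: 'n set) = 3 then 2 else 3)"
proof -
  obtain a b c :: 'n where d: "distinct [a, b, c]"
    using obtain_distinct_triple[OF assms] by blast
  let ?E = "{(E1 True, 0), (E1 False, 0), (0, E0)} :: 'n pair set"
  have U3_span: "U3 \<subseteq> pairs.span ?E" by (rule U3_subset_span[OF d])
  have E_U3: "?E \<subseteq> U3" using E0_in_U3 E1_in_U3 by blast
  show ?thesis
  proof (cases "card (UNIV :: 'n set) = 3")
    case True
    then have "(E1 False, 0) = (0 :: 'n pair)"
      using E1_False_eq_0_if_card_3 by (simp add: zero_prod_def)
    then have "pairs.span ?E = pairs.span {(E1 True, 0), (0, E0)}"
      by (metis insert_commute pairs.span_insert_0)
    then show ?thesis
      using True U3_span E_U3 independent_E1_moved_E0[OF d] card_E1_moved_E0[OF d]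
      by (intro pairs.dim_unique[of "{(E1 True, 0), (0, E0)}"]) auto
  next
    case False
    have "card {a, b, c} = 3" using d by simp
    then have "{a, b, c} \<noteq> UNIV" using False by auto
    then obtain k where k: "k \<notin> {a, b, c}" by blast
    show ?thesis
      using False pairs.dim_unique[OF E_U3 U3_span independent_E1_E0[OF d k] card_E1_E0[OF d k]]
      by simp
  qed
qed

end
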